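(* Let $\sigma$ be any argumentation semantics whose extensions are maximal admissible sets (w.r.t. set inclusion). For every two argumentation frameworks $AF=(AR,Attacks)$, $AF'=(AR',Attacks')$ with $AF\preceq_N AF'$: if for every $E\in\sigma(AF)$ there exists $E'\in\sigma(AF')$ with $E\subseteq E'$, then for every $E\in\sigma(AF)$ there exists $E'\in\sigma(AF')$ with $E'\not\subseteq AR$ or $E'=E$.
   Context: An argumentation framework is a pair $(AR,Attacks)$ with $AR$ a finite set and $Attacks\subseteq AR\times AR$; $a$ attacks $b$ iff $(a,b)\in Attacks$; a set $S$ attacks $b$ iff some element of $S$ attacks $b$. A set $S$ is conflict-free iff no element of $S$ attacks an element of $S$; an argument $a$ is acceptable w.r.t. $S$ iff every attacker of $a$ is attacked by $S$; a conflict-free $S$ is admissible iff every element of $S$ is acceptable w.r.t. $S$. An argumentation semantics $\sigma$ assigns to each argumentation framework a set $\sigma(AF)$ of subsets of $AR$; "$\sigma$'s extensions are maximal admissible sets" means that for every $AF$, every $E\in\sigma(AF)$ is a $\subseteq$-maximal admissible set of $AF$. $AF\preceq_N AF'$ (normal expansion) iff $AR\subseteq AR'$, $Attacks\subseteq Attacks'$ and no $(a,b)\in Attacks'\setminus Attacks$ has both $a,b\in AR$. *)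

theory Defs
  imports Main
begin

type_synonym 'a af = "'a set \<times> ('a \<times> 'a) set"

definition is_af :: "'a af \<Rightarrow> bool" where
  "is_af AF \<longleftrightarrow> finite (fst AF) \<and> snd AF \<subseteq> fst AF \<times> fst AF"

definition attacks :: "'a af \<Rightarrow> 'a \<Rightarrow> 'a \<Rightarrow> bool" where
  "attacks AF a b \<longleftrightarrow> (a, b) \<in> snd AF"

definition set_attacks :: "'a af \<Rightarrow> 'a set \<Rightarrow> 'a \<Rightarrow> bool" where
  "set_attacks AF S b \<longleftrightarrow> (\<exists>a\<in>S. attacks AF a b)"

definition conflict_free :: "'a af \<Rightarrow> 'a set \<Rightarrow> bool" where
  "conflict_free AF S \<longleftrightarrow> (\<forall>a\<in>S. \<forall>b\<in>S. \<not> attacks AF a b)"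

definition acceptable :: "'a af \<Rightarrow> 'a \<Rightarrow> 'a set \<Rightarrow> bool" where
  "acceptable AF a S \<longleftrightarrow> (\<forall>b\<in>fst AF. attacks AF b a \<longrightarrow> set_attacks AF S b)"

definition admissible :: "'a af \<Rightarrow> 'a set \<Rightarrow> bool" where
  "admissible AF S \<longleftrightarrow> S \<subseteq> fst AF \<and> conflict_free AF S \<and> (\<forall>a\<in>S. acceptable AF a S)"

definition maximal_admissible :: "'a af \<Rightarrow> 'a set \<Rightarrow> bool" where
  "maximal_admissible AF S \<longleftrightarrow> admissible AF S \<and> (\<forall>T. admissible AF T \<and> S \<subseteq> T \<longrightarrow> T = S)"

definition normal_expansion :: "'a af \<Rightarrow> 'a af \<Rightarrow> bool" where
  "normal_expansion AF AF' \<longleftrightarrow> fst AF \<subseteq> fst AF' \<and> snd AF \<subseteq> snd AF' \<and>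
     (\<forall>(a, b) \<in> snd AF' - snd AF. \<not> (a \<in> fst AF \<and> b \<in> fst AF))"

end

theory Submission
  imports Defs
begin

(* A normal expansion adds no attacks among the old arguments, so an admissible set of the
   expanded framework that consists of old arguments is already admissible in the original one.
   If a sigma-extension E of AF is contained in a sigma-extension E' of AF' with E' inside AR,
   then E' is admissible in AF, and maximality of E forces E' = E. *)

lemma normal_expansion_attacks_iff:
  assumes "normal_expansion AF AF'" and "a \<in> fst AF" and "b \<in> fst AF"
  shows "attacks AF' a b \<longleftrightarrow> attacks AF a b"
  using assms unfolding normal_expansion_def attacks_def by blast

lemma admissible_if_normal_expansion:
  assumes exp: "normal_expansion AF AF'"
    and adm': "admissible AF' S" and S: "S \<subseteq> fst AF"
  shows "admissible AF S"
proof -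
  have att_iff: "attacks AF' a b \<longleftrightarrow> attacks AF a b" if "a \<in> fst AF" "b \<in> fst AF" for a b
    using normal_expansion_attacks_iff[OF exp that] .
  have "conflict_free AF S"
    using adm' S att_iff unfolding admissible_def conflict_free_def by blast
  moreover have "acceptable AF a S" if a: "a \<in> S" for a
    unfolding acceptable_def
  proof (intro ballI impI)
    fix b assume b: "b \<in> fst AF" and "attacks AF b a"
    have "b \<in> fst AF'" using b exp unfolding normal_expansion_def by blast
    moreover have "attacks AF' b a" using \<open>attacks AF b a\<close> a b S att_iff by blast
    ultimately obtain c where "c \<in> S" "attacks AF' c b"
      using adm' a unfolding admissible_def acceptable_def set_attacks_def by blast
    then show "set_attacks AF S b"
      using b S att_iff unfolding set_attacks_def by blast
  qed
  ultimately show ?thesis using S unfolding admissible_def by blast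
qed

theorem proposition57:
  fixes \<sigma> :: "'a af \<Rightarrow> 'a set set"
    and AR AR' :: "'a set" and Att Att' :: "('a \<times> 'a) set"
  assumes sem: "\<And>AF E. is_af AF \<Longrightarrow> E \<in> \<sigma> AF \<Longrightarrow> maximal_admissible AF E"
    and af: "is_af (AR, Att)" and af': "is_af (AR', Att')"
    and exp: "normal_expansion (AR, Att) (AR', Att')"
    and hyp: "\<forall>E \<in> \<sigma> (AR, Att). \<exists>E' \<in> \<sigma> (AR', Att'). E \<subseteq> E'"
  shows "\<forall>E \<in> \<sigma> (AR, Att). \<exists>E' \<in> \<sigma> (AR', Att'). \<not> E' \<subseteq> AR \<or> E' = E"
proof
  fix E assume E: "E \<in> \<sigma> (AR, Att)"
  then obtain E' where E': "E' \<in> \<sigma> (AR', Att')" "E \<subseteq> E'" using hyp by blast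
  have "E' = E" if "E' \<subseteq> AR"
  proof -
    have "admissible (AR', Att') E'"
      using sem[OF af' E'(1)] unfolding maximal_admissible_def by blast
    then have "admissible (AR, Att) E'"
      using admissible_if_normal_expansion[OF exp] that by simp
    then show ?thesis
      using sem[OF af E] E'(2) unfolding maximal_admissible_def by blast
  qed
  then show "\<exists>E' \<in> \<sigma> (AR', Att'). \<not> E' \<subseteq> AR \<or> E' = E" using E'(1) by blast
qed

end
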